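(* Let $Q$ be a smooth real function on an open interval, and let $C_1\neq 0$, $C_2$ and $\alpha_0$ be real constants. Let $G$ be an antiderivative $$G(\rho)=\int\frac{Q'(\rho)}{C_1(C_1\rho+C_2)}\,d\rho$$ on an open interval $J$ on which $C_1\rho+C_2\neq 0$. Assume $G$ is invertible on $J$, meaning that it is a diffeomorphism of $J$ onto its image. Then the function $$\rho(t,x)=G^{-1}\!\left(\frac{x+\alpha_0}{C_1}+t\right),$$ defined for all $(t,x)$ with $\frac{x+\alpha_0}{C_1}+t\in G(J)$, is a solution of the non-stationary filtration equation $\rho_t=(Q(\rho))_{xx}$.
   Context: In the paper, $Q(\rho)=\int\frac{k(\rho)\rho p'(\rho)}{\mu(\rho)}d\rho$, where $p$ is the pressure, $k$ the permeability and $\mu$ the viscosity, all given as functions of the density $\rho$ along a thermodynamic process. *)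

theory Defs
  imports "HOL-Analysis.Analysis"
begin

definition smooth_on :: "real set \<Rightarrow> (real \<Rightarrow> real) \<Rightarrow> bool" where
  "smooth_on S f \<longleftrightarrow> (\<forall>n. \<forall>x\<in>S. ((deriv ^^ n) f) differentiable (at x))"

definition solves_filtration ::
  "(real \<Rightarrow> real) \<Rightarrow> (real \<Rightarrow> real \<Rightarrow> real) \<Rightarrow> (real \<times> real) set \<Rightarrow> bool" where
  "solves_filtration Q rho \<Omega> \<longleftrightarrow>
     (\<forall>(t, x)\<in>\<Omega>. \<exists>Qx D.
        (\<forall>\<^sub>F y in nhds x. ((\<lambda>z. Q (rho t z)) has_real_derivative Qx y) (at y)) \<and>
        (Qx has_real_derivative D) (at x) \<and>
        ((\<lambda>s. rho s x) has_real_derivative D) (at t))"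

end

theory Submission
  imports Defs
begin

text \<open>The solution is a travelling wave \<open>\<rho> = H(u)\<close> with \<open>H = G\<^sup>-\<^sup>1\<close> and
  \<open>u = (x + \<alpha>\<^sub>0)/C\<^sub>1 + t\<close>. Differentiating \<open>G (H v) = v\<close> gives
  \<open>(Q \<circ> H)' = C\<^sub>1 (C\<^sub>1 H + C\<^sub>2)\<close>, so \<open>(Q(\<rho>))\<^sub>x = C\<^sub>1 H(u) + C\<^sub>2\<close> and
  \<open>(Q(\<rho>))\<^sub>x\<^sub>x = H'(u) = \<rho>\<^sub>t\<close>.\<close>

lemma smooth_on_has_real_derivative:
  assumes "smooth_on S f" "x \<in> S"
  shows "(f has_real_derivative deriv f x) (at x)"
proof -
  have "f differentiable (at x)"
    using assms unfolding smooth_on_def by (metis funpow_0)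
  then show ?thesis
    by (simp add: DERIV_deriv_iff_real_differentiable)
qed

lemma inv_into_derivative_mult_eq_1:
  fixes G :: "real \<Rightarrow> real"
  assumes "open J" "inj_on G J" "r \<in> J"
    and "(G has_real_derivative g) (at r)"
    and "(inv_into J G has_real_derivative h) (at (G r))"
  shows "h * g = 1"
proof -
  have "((inv_into J G \<circ> G) has_real_derivative h * g) (at r)"
    using DERIV_chain[OF assms(5,4)] .
  then have "((\<lambda>x. x) has_real_derivative h * g) (at r)"
    by (rule has_field_derivative_transform_within_open[OF _ \<open>open J\<close> \<open>r \<in> J\<close>])
       (simp add: \<open>inj_on G J\<close>)
  then show ?thesis
    using DERIV_ident DERIV_unique by blast
qed

lemma DERIV_comp_inv_into:
  fixes Q G :: "real \<Rightarrow> real"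
  assumes "open J" "inj_on G J" "r \<in> J" "c \<noteq> 0"
    and Q: "(Q has_real_derivative q) (at r)"
    and G: "(G has_real_derivative q / c) (at r)"
    and H: "(inv_into J G has_real_derivative h) (at (G r))"
  shows "((\<lambda>v. Q (inv_into J G v)) has_real_derivative c) (at (G r))"
proof -
  have "h * (q / c) = 1"
    using inv_into_derivative_mult_eq_1[OF assms(1-3) G H] .
  then have "q * h = c"
    using \<open>c \<noteq> 0\<close> by (simp add: field_simps)
  moreover have "inv_into J G (G r) = r"
    using assms(2,3) by simp
  ultimately show ?thesis
    using DERIV_chain2[OF _ H, of Q q] Q by simp
qed

lemma travelling_wave_solves_filtration:
  fixes Q H :: "real \<Rightarrow> real" and U :: "real set" and C1 C2 \<alpha>0 :: real
  assumes "open U" and C1: "C1 \<noteq> 0"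
    and H: "\<And>v. v \<in> U \<Longrightarrow> (H has_real_derivative deriv H v) (at v)"
    and flux: "\<And>v. v \<in> U \<Longrightarrow> ((\<lambda>v. Q (H v)) has_real_derivative C1 * (C1 * H v + C2)) (at v)"
  shows "solves_filtration Q (\<lambda>t x. H ((x + \<alpha>0) / C1 + t)) {(t, x). (x + \<alpha>0) / C1 + t \<in> U}"
proof -
  have "\<exists>Qx D. (\<forall>\<^sub>F y in nhds x. ((\<lambda>z. Q (H ((z + \<alpha>0) / C1 + t))) has_real_derivative Qx y) (at y))
      \<and> (Qx has_real_derivative D) (at x) \<and> ((\<lambda>s. H ((x + \<alpha>0) / C1 + s)) has_real_derivative D) (at t)"
    if ux: "(x + \<alpha>0) / C1 + t \<in> U" for t x
  proof -
    define u where "u y = (y + \<alpha>0) / C1 + t" for y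
    have du: "(u has_real_derivative 1 / C1) (at y)" for y
      unfolding u_def using C1 by (auto intro!: derivative_eq_intros)
    have ux_in: "u x \<in> U"
      using ux by (simp add: u_def)
    have open_preimage: "open (u -` U)"
      using \<open>open U\<close> C1 unfolding u_def by (auto intro!: open_vimage continuous_intros)
    have near: "\<forall>\<^sub>F y in nhds x. u y \<in> U"
      using eventually_nhds_in_open[OF open_preimage] ux_in by simp
    have flux_x: "\<forall>\<^sub>F y in nhds x. ((\<lambda>z. Q (H (u z))) has_real_derivative C1 * H (u y) + C2) (at y)"
      using near
    proof eventually_elim
      case (elim y)
      have "C1 * (C1 * H (u y) + C2) * (1 / C1) = C1 * H (u y) + C2"
        using C1 by simp
      then show ?case
        using DERIV_chain2[OF flux[OF elim] du] by (simp only:)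
    qed
    have flux_xx: "((\<lambda>y. C1 * H (u y) + C2) has_real_derivative deriv H (u x)) (at x)"
      using DERIV_add[OF DERIV_cmult[OF DERIV_chain2[OF H[OF ux_in] du], of C1] DERIV_const[of C2]] C1
      by simp
    have rho_t: "((\<lambda>s. H ((x + \<alpha>0) / C1 + s)) has_real_derivative deriv H (u x)) (at t)"
    proof -
      have "((\<lambda>s. (x + \<alpha>0) / C1 + s) has_real_derivative 1) (at t)"
        by (auto intro!: derivative_eq_intros)
      from DERIV_chain2[OF H[OF ux] this] show ?thesis
        by (simp add: u_def)
    qed
    show ?thesis
      using flux_x flux_xx rho_t unfolding u_def
      by (intro exI[of _ "\<lambda>y. C1 * H ((y + \<alpha>0) / C1 + t) + C2"] exI conjI)
  qed
  then show ?thesis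
    unfolding solves_filtration_def by auto
qed

theorem mainTheorem2:
  fixes Q G :: "real \<Rightarrow> real" and I J :: "real set" and C1 C2 \<alpha>0 :: real
  assumes I: "open I" "is_interval I" "I \<noteq> {}"
      and Qsmooth: "smooth_on I Q"
      and J: "open J" "is_interval J" "J \<noteq> {}" "J \<subseteq> I"
      and C1: "C1 \<noteq> 0"
      and nz: "\<forall>r\<in>J. C1 * r + C2 \<noteq> 0"
      and G: "\<forall>r\<in>J. (G has_real_derivative deriv Q r / (C1 * (C1 * r + C2))) (at r)"
      and Ginj: "inj_on G J"
      and Ginv: "smooth_on (G ` J) (inv_into J G)"
  shows "solves_filtration Q (\<lambda>t x. inv_into J G ((x + \<alpha>0) / C1 + t))
           {(t, x). (x + \<alpha>0) / C1 + t \<in> G ` J}"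
proof (rule travelling_wave_solves_filtration[OF _ C1])
  let ?H = "inv_into J G"
  have "continuous_on J G"
    using G by (meson DERIV_isCont continuous_at_imp_continuous_on)
  then show "open (G ` J)"
    using invariance_of_domain J(1) Ginj by blast
  show dH: "(?H has_real_derivative deriv ?H v) (at v)" if "v \<in> G ` J" for v
    using smooth_on_has_real_derivative[OF Ginv that] .
  show "((\<lambda>v. Q (?H v)) has_real_derivative C1 * (C1 * ?H v + C2)) (at v)" if v: "v \<in> G ` J" for v
  proof -
    obtain r where r: "r \<in> J" "v = G r"
      using v by blast
    then show ?thesis
      using DERIV_comp_inv_into[OF J(1) Ginj r(1) _ _ bspec[OF G r(1)] dH[OF v, unfolded r(2)]]
        smooth_on_has_real_derivative[OF Qsmooth] J(4) C1 nz Ginj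
      by (auto simp: subset_iff)
  qed
qed

end
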